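(* Let $K\ge 2$, let $m_1<\cdots<m_K$ be pairwise co-prime positive integers, $M$ a positive integer and $M_k=Mm_k$. Let $N_1,N_2$ be nonnegative integers, $r_{l,k}=\langle N_l\rangle_{M_k}$, $r_l^c=\langle N_l\rangle_M$, and $\tilde r_{l,k}=r_{l,k}+\Delta r_{l,k}$ ($l=1,2$, $k=1,\ldots,K$) with integer errors $\Delta r_{l,k}$; let $\tau=\max_{l,k}|\Delta r_{l,k}|$ and $\tilde r^c_{l,k}=\langle\tilde r_{l,k}\rangle_M$. Sort the $2K$ numbers $\tilde r^c_{l,k}$ (with multiplicity) as $s_1\le\cdots\le s_{2K}$, put $D_k=s_{k+1}-s_k$ ($1\le k\le 2K-1$), $D_{2K}=s_1-s_{2K}+M$; assume $\tau<M/8$, so that there is a unique $k_0\in\{1,\ldots,K\}$ with $D_{k_0}+D_{k_0+K}>M/2$, and define the multisets $\Omega_1=\{s_{k_0+1},\ldots,s_{k_0+K}\}$ and $\Omega_2=\{s_1,\ldots,s_K\}$ if $k_0=K$, $\Omega_2=\{s_{k_0+K+1}-M,\ldots,s_{2K}-M,s_1,\ldots,s_{k_0}\}$ if $k_0\neq K$. If in addition $M/4\le|d_M(r_1^c,r_2^c)|\le M/2$, then for every $k\in\{1,\ldots,K\}$ there exist $\omega\in\Omega_1$ and $\upsilon\in\Omega_2$ such that either $$d_M(\tilde r^c_{1,k},\omega)=0\ \text{ and }\ d_M(\tilde r^c_{2,k},\upsilon)=0,$$ or $$d_M(\tilde r^c_{2,k},\omega)=0\ \text{ and }\ d_M(\tilde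 r^c_{1,k},\upsilon)=0.$$
   Context: For a positive integer $n$ and an integer $x$, $\langle x\rangle_n$ is the unique element of $\{0,\ldots,n-1\}$ congruent to $x$ modulo $n$. For real $x$, $[x]$ denotes the rounding integer, i.e. the integer with $-1/2\le x-[x]<1/2$. For reals $x,y$ and $C>0$, the circular distance is $d_C(x,y)=x-y-\left[\frac{x-y}{C}\right]C$; in particular $d_C(x,y)=0$ iff $x-y$ is an integer multiple of $C$. *)

theory Defs
  imports Complex_Main "HOL-Library.Multiset"
begin

definition rnd :: "real \<Rightarrow> int" where
  "rnd x = \<lfloor>x + 1/2\<rfloor>"

definition circ_dist :: "real \<Rightarrow> real \<Rightarrow> real \<Rightarrow> real" where
  "circ_dist C x y = x - y - real_of_int (rnd ((x - y) / C)) * C"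

definition lres :: "int \<Rightarrow> int \<Rightarrow> int" where
  "lres n x = x mod n"

end

theory Submission
  imports Defs
begin

text \<open>Every perturbed residue of \<open>N\<^sub>l\<close> lies within \<open>\<tau>\<close> of \<open>r\<^sup>c\<^sub>l\<close> on the circle of
  circumference \<open>M\<close>. As the two centres are at least \<open>M/4 > 2\<tau>\<close> apart, the \<open>2K\<close> sorted points
  split into two clusters of \<open>K\<close> points each, of diameter at most \<open>2\<tau>\<close>. A cluster meeting both
  the window \<open>s(k0+1), \<dots>, s(k0+K)\<close> and its complement must straddle one of the gaps
  \<open>D(k0)\<close>, \<open>D(k0+K)\<close>. Two clusters cannot straddle the same gap, since its endpoint would belong
  to both, and straddling both gaps would give \<open>D(k0) + D(k0+K) \<le> 4\<tau> < M/2\<close>. Hence, by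
  counting, the window is one whole cluster, so \<open>\<Omega>1\<close> and \<open>\<Omega>2\<close> are the two clusters (up to
  multiples of \<open>M\<close>), and the two residues with index \<open>k\<close> lie in different clusters.\<close>

lemma rnd_of_int_add: "rnd (of_int q + x) = q" if "-1/2 \<le> x" "x < 1/2"
  unfolding rnd_def using that by (simp add: floor_eq_iff)

lemma circ_dist_of_int_eq:
  fixes a b e q :: int and M :: nat
  assumes "a - b = e + q * int M" "4 * \<bar>e\<bar> < int M"
  shows "circ_dist (real M) (of_int a) (of_int b) = of_int e"
proof -
  have "M > 0"
    using assms(2) abs_ge_zero[of e] by linarith
  have "(of_int a - of_int b) / real M = of_int q + of_int e / real M"
    using \<open>M > 0\<close> arg_cong[OF assms(1), of real_of_int] by (simp add: field_simps)
  moreover have "-1/2 \<le> real_of_int e / real M" "real_of_int e / real M < 1/2"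
    using assms(2) \<open>M > 0\<close> by (auto simp: field_simps abs_less_iff)
  ultimately have "rnd ((of_int a - of_int b) / real M) = q"
    using rnd_of_int_add by simp
  then show ?thesis
    unfolding circ_dist_def using arg_cong[OF assms(1), of real_of_int] by simp
qed

lemma circ_dist_self: "circ_dist C x x = 0"
  unfolding circ_dist_def rnd_def by simp

lemma circ_dist_diff_modulus: "circ_dist C x (x - C) = 0"
  unfolding circ_dist_def rnd_def by (cases "C = 0") simp_all

definition near_mod :: "int \<Rightarrow> int \<Rightarrow> int \<Rightarrow> int \<Rightarrow> bool" where
  "near_mod M t c y \<longleftrightarrow> (\<exists>e. \<bar>e\<bar> \<le> t \<and> M dvd (y - c - e))"

lemma near_mod_radius_nonneg: "near_mod M t c y \<Longrightarrow> 0 \<le> t"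
  unfolding near_mod_def by force

lemma near_mod_add_modulus: "near_mod M t c y \<Longrightarrow> near_mod M t c (y + M)"
  unfolding near_mod_def by (metis add_diff_eq diff_add_eq dvd_add_left_iff dvd_refl)

lemma near_mod_residue:
  fixes M P N d t :: int
  assumes "M > 0" "\<bar>d\<bar> \<le> t"
  shows "near_mod M t (N mod M) ((N mod (M * P) + d) mod M)"
  unfolding near_mod_def
proof (intro exI conjI)
  have "(N mod (M * P) + d) mod M = (N mod M + d) mod M"
    by (metis mod_add_left_eq mod_mod_cancel dvd_triv_left)
  then have "(N mod (M * P) + d) mod M - N mod M - d = M * - ((N mod M + d) div M)"
    using div_mult_mod_eq[of "N mod M + d" M] by (simp add: algebra_simps)
  then show "M dvd (N mod (M * P) + d) mod M - N mod M - d" by simp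
qed (fact assms(2))

lemma near_mod_disjoint_of_far:
  fixes M :: nat and t c1 c2 y :: int
  assumes "8 * t < int M"
    and far: "real M / 4 \<le> \<bar>circ_dist (real M) (of_int c1) (of_int c2)\<bar>"
    and "near_mod (int M) t c1 y" "near_mod (int M) t c2 y"
  shows False
proof -
  obtain e1 a where e1: "\<bar>e1\<bar> \<le> t" "y - c1 - e1 = int M * a"
    using assms(3) unfolding near_mod_def dvd_def by blast
  obtain e2 b where e2: "\<bar>e2\<bar> \<le> t" "y - c2 - e2 = int M * b"
    using assms(4) unfolding near_mod_def dvd_def by blast
  have "c1 - c2 = (e2 - e1) + (b - a) * int M"
    using e1 e2 by (simp add: algebra_simps)
  moreover have "4 * \<bar>e2 - e1\<bar> < int M"
    using e1(1) e2(1) assms(1) by (auto simp: abs_le_iff abs_if split: if_splits)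
  ultimately have "circ_dist (real M) (of_int c1) (of_int c2) = of_int (e2 - e1)"
    by (rule circ_dist_of_int_eq)
  then have "\<bar>circ_dist (real M) (of_int c1) (of_int c2)\<bar> \<le> 2 * of_int t"
    using e1 e2 by linarith
  with far assms(1) show False by linarith
qed

text \<open>The arcs \<open>[x1, y0]\<close> and \<open>[y1, x0 + M]\<close> cover the circle up to the gaps \<open>(x0, x1)\<close>
  and \<open>(y0, y1)\<close>; a cluster of diameter \<open>2t\<close> meeting both arcs straddles one of the gaps.\<close>

lemma near_mod_straddles_gap:
  fixes M t c x0 x1 y0 y1 u U :: int
  assumes "2 * t < M"
    and "x0 \<le> x1" "y0 \<le> y1"
    and "x1 \<le> u" "u \<le> y0" "y1 \<le> U" "U \<le> x0 + M"
    and "near_mod M t c u" "near_mod M t c U"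
  shows "(near_mod M t c y0 \<and> y1 - y0 \<le> 2 * t) \<or> (near_mod M t c x1 \<and> x1 - x0 \<le> 2 * t)"
proof -
  obtain d where d: "\<bar>d\<bar> \<le> t" "M dvd (u - c - d)"
    using assms(8) unfolding near_mod_def by blast
  obtain d' where d': "\<bar>d'\<bar> \<le> t" "M dvd (U - c - d')"
    using assms(9) unfolding near_mod_def by blast
  have "M dvd (U - u - (d' - d))"
    using dvd_diff[OF d'(2) d(2)] by (simp add: algebra_simps)
  then obtain j where j: "U - u - (d' - d) = M * j"
    by (auto simp: dvd_def)
  have "M > 0"
    using assms(1) d(1) by linarith
  have "j = 0 \<or> j = 1"
  proof -
    have "M * j < M * 2" "M * (-1) < M * j"
      using j assms d d' by linarith+
    then have "-1 < j" "j < 2"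
      using \<open>M > 0\<close> mult_less_cancel_left_pos by blast+
    then show ?thesis by linarith
  qed
  then show ?thesis
  proof
    assume "j = 0"
    then have "near_mod M t c y0"
      unfolding near_mod_def using j d d' assms
      by (intro exI[of _ "d + (y0 - u)"]) (auto simp: algebra_simps)
    with \<open>j = 0\<close> show ?thesis
      using j d d' assms by auto
  next
    assume "j = 1"
    then have "near_mod M t c x1"
      unfolding near_mod_def using j d d' assms
      by (intro exI[of _ "d - (u - x1)"]) (auto simp: algebra_simps)
    with \<open>j = 1\<close> show ?thesis
      using j d d' assms by auto
  qed
qed

lemma two_clusters_cannot_both_straddle:
  fixes M t c c' x0 x1 y0 y1 u w U W :: int
  assumes small: "8 * t < M"
    and disjoint: "\<forall>y. \<not> (near_mod M t c y \<and> near_mod M t c' y)"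
    and "x0 \<le> x1" "y0 \<le> y1" and wide: "M < 2 * ((x1 - x0) + (y1 - y0))"
    and "x1 \<le> u" "u \<le> y0" "x1 \<le> w" "w \<le> y0"
    and "y1 \<le> U" "U \<le> x0 + M" "y1 \<le> W" "W \<le> x0 + M"
    and "near_mod M t c u" "near_mod M t c U" "near_mod M t c' w" "near_mod M t c' W"
  shows False
proof -
  have "2 * t < M"
    using small near_mod_radius_nonneg[OF assms(14)] by linarith
  have "(near_mod M t c y0 \<and> y1 - y0 \<le> 2 * t) \<or> (near_mod M t c x1 \<and> x1 - x0 \<le> 2 * t)"
    using near_mod_straddles_gap[OF \<open>2 * t < M\<close> assms(3,4,6,7,10,11,14,15)] .
  moreover have "(near_mod M t c' y0 \<and> y1 - y0 \<le> 2 * t) \<or> (near_mod M t c' x1 \<and> x1 - x0 \<le> 2 * t)"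
    using near_mod_straddles_gap[OF \<open>2 * t < M\<close> assms(3,4,8,9,12,13,16,17)] .
  ultimately show False
    using disjoint small wide by auto
qed

definition cyc_next :: "int \<Rightarrow> int list \<Rightarrow> nat \<Rightarrow> int" where
  "cyc_next M xs i = (if Suc i < length xs then xs ! Suc i else xs ! 0 + M)"

lemma sorted_cyclic_window_bounds:
  fixes xs :: "int list" and M :: int and K k0 :: nat
  assumes sorted: "sorted xs" and len: "length xs = 2 * K" and range: "set xs \<subseteq> {0..<M}"
    and k0: "1 \<le> k0" "k0 \<le> K"
  shows "i \<in> {k0..<k0+K} \<Longrightarrow> xs ! k0 \<le> xs ! i \<and> xs ! i \<le> xs ! (k0+K-1)"
    and "j < 2 * K \<Longrightarrow> j \<notin> {k0..<k0+K} \<Longrightarrow>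
           cyc_next M xs (k0+K-1) \<le> (if j < k0 then xs ! j + M else xs ! j) \<and>
           (if j < k0 then xs ! j + M else xs ! j) \<le> xs ! (k0-1) + M"
    and "xs ! (k0-1) \<le> xs ! k0" "xs ! (k0+K-1) \<le> cyc_next M xs (k0+K-1)"
proof -
  have mono: "xs ! i \<le> xs ! j" if "i \<le> j" "j < 2 * K" for i j
    using sorted_nth_mono[OF sorted that(1)] that len by simp
  have rng: "0 \<le> xs ! i \<and> xs ! i < M" if "i < 2 * K" for i
    using range nth_mem[of i xs] that len by fastforce
  show "i \<in> {k0..<k0+K} \<Longrightarrow> xs ! k0 \<le> xs ! i \<and> xs ! i \<le> xs ! (k0+K-1)"
    using k0 by (auto intro!: mono)
  show "xs ! (k0-1) \<le> xs ! k0"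
    using k0 by (intro mono) auto
  have first: "k0-1 < 2 * K" and last: "k0+K-1 < 2 * K"
    using k0 by simp_all
  show "xs ! (k0+K-1) \<le> cyc_next M xs (k0+K-1)"
    unfolding cyc_next_def len using k0 mono rng[of 0] rng[OF last] by auto
  assume j: "j < 2 * K" "j \<notin> {k0..<k0+K}"
  show "cyc_next M xs (k0+K-1) \<le> (if j < k0 then xs ! j + M else xs ! j) \<and>
        (if j < k0 then xs ! j + M else xs ! j) \<le> xs ! (k0-1) + M"
  proof (cases "j < k0")
    case True
    then show ?thesis
      unfolding cyc_next_def len using k0 mono rng[of "k0+K"] rng[of j] by auto
  next
    case False
    then show ?thesis
      unfolding cyc_next_def len using j k0 mono rng[of j] rng[OF first] by auto
  qed
qed

lemma sorted_window_homogeneous: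
  fixes xs :: "int list" and M t c1 c2 :: int and K k0 :: nat
  assumes sorted: "sorted xs" and len: "length xs = 2 * K" and range: "set xs \<subseteq> {0..<M}"
    and t: "8 * t < M"
    and cover: "\<forall>v\<in>set xs. near_mod M t c1 v \<or> near_mod M t c2 v"
    and disjoint: "\<forall>y. \<not> (near_mod M t c1 y \<and> near_mod M t c2 y)"
    and count: "length (filter (near_mod M t c1) xs) = K" "length (filter (near_mod M t c2) xs) = K"
    and k0: "1 \<le> k0" "k0 \<le> K"
    and wide: "M < 2 * ((cyc_next M xs (k0-1) - xs ! (k0-1)) +
                        (cyc_next M xs (k0+K-1) - xs ! (k0+K-1)))"
  shows "(\<forall>i\<in>{k0..<k0+K}. near_mod M t c1 (xs ! i)) \<or> (\<forall>i\<in>{k0..<k0+K}. near_mod M t c2 (xs ! i))"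
proof (rule ccontr)
  let ?W = "{k0..<k0+K}"
  \<comment> \<open>lifting the points before the window by \<open>M\<close> turns its complement into the arc
    \<open>[cyc_next M xs (k0+K-1), xs ! (k0-1) + M]\<close>\<close>
  define lift where "lift j = (if j < k0 then xs ! j + M else xs ! j)" for j
  have escapes: "\<exists>j<2*K. j \<notin> ?W \<and> P (xs ! j)"
    if "length (filter P xs) = K" "i \<in> ?W" "\<not> P (xs ! i)" for P i
  proof (rule ccontr)
    assume "\<not> ?thesis"
    then have "{j. j < length xs \<and> P (xs ! j)} \<subseteq> ?W"
      using len by auto
    then have "{j. j < length xs \<and> P (xs ! j)} = ?W"
      using that(1) by (intro card_subset_eq) (auto simp: length_filter_conv_card)
    with that(2,3) show False by blast
  qed
  have lift_near: "near_mod M t c (lift j)" if "near_mod M t c (xs ! j)" for c j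
    using that near_mod_add_modulus unfolding lift_def by auto
  have near_window: "near_mod M t c1 (xs ! i) \<or> near_mod M t c2 (xs ! i)" if "i \<in> ?W" for i
    using that cover k0 len by simp
  have wide': "M < 2 * ((xs ! k0 - xs ! (k0-1)) + (cyc_next M xs (k0+K-1) - xs ! (k0+K-1)))"
    using wide k0 len by (simp add: cyc_next_def)
  note bounds = sorted_cyclic_window_bounds[OF sorted len range k0, folded lift_def]
  assume "\<not> ?thesis"
  then obtain u w where u: "u \<in> ?W" "\<not> near_mod M t c2 (xs ! u)"
    and w: "w \<in> ?W" "\<not> near_mod M t c1 (xs ! w)"
    by blast
  obtain U where U: "U < 2 * K" "U \<notin> ?W" "near_mod M t c1 (xs ! U)"
    using escapes[OF count(1) w] by blast
  obtain V where V: "V < 2 * K" "V \<notin> ?W" "near_mod M t c2 (xs ! V)"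
    using escapes[OF count(2) u] by blast
  have u_in: "xs ! k0 \<le> xs ! u" "xs ! u \<le> xs ! (k0+K-1)"
    and w_in: "xs ! k0 \<le> xs ! w" "xs ! w \<le> xs ! (k0+K-1)"
    using bounds(1)[OF u(1)] bounds(1)[OF w(1)] by simp_all
  have U_out: "cyc_next M xs (k0+K-1) \<le> lift U" "lift U \<le> xs ! (k0-1) + M"
    and V_out: "cyc_next M xs (k0+K-1) \<le> lift V" "lift V \<le> xs ! (k0-1) + M"
    using bounds(2)[OF U(1,2)] bounds(2)[OF V(1,2)] by simp_all
  show False
    by (rule two_clusters_cannot_both_straddle[where c = c1 and c' = c2,
          OF t _ bounds(3,4) wide' u_in w_in U_out V_out])
      (use disjoint near_window[OF u(1)] near_window[OF w(1)] u(2) w(2)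
         lift_near[OF U(3)] lift_near[OF V(3)] in blast)+
qed

lemma filter_length_window_iff:
  assumes "length (filter Q xs) = K" "a + K \<le> length xs" "\<forall>i\<in>{a..<a+K}. Q (xs ! i)" "i < length xs"
  shows "Q (xs ! i) \<longleftrightarrow> i \<in> {a..<a+K}"
proof -
  have "{a..<a+K} = {i. i < length xs \<and> Q (xs ! i)}"
    using assms(1-3) by (intro card_subset_eq) (auto simp: length_filter_conv_card)
  then show ?thesis
    using assms(4) by blast
qed

text \<open>\<open>\<Omega>\<^sub>1\<close> and \<open>\<Omega>\<^sub>2\<close> of the statement, for the 1-based enumeration \<open>s\<^sub>i = xs ! (i - 1)\<close>.\<close>

definition window_mset :: "int list \<Rightarrow> nat \<Rightarrow> nat \<Rightarrow> int multiset" where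
  "window_mset xs k0 K = mset (map (\<lambda>i. xs ! (i-1)) [k0+1..<k0+K+1])"

definition co_window_mset :: "nat \<Rightarrow> int list \<Rightarrow> nat \<Rightarrow> nat \<Rightarrow> int multiset" where
  "co_window_mset M xs k0 K = (if k0 = K then mset (map (\<lambda>i. xs ! (i-1)) [1..<K+1])
     else mset (map (\<lambda>i. xs ! (i-1) - int M) [k0+K+1..<2*K+1] @ map (\<lambda>i. xs ! (i-1)) [1..<k0+1]))"

lemma nth_in_window_mset:
  assumes "i \<in> {k0..<k0+K}"
  shows "xs ! i \<in># window_mset xs k0 K"
proof -
  have "Suc i \<in> set [k0+1..<k0+K+1]"
    using assms by auto
  then show ?thesis
    unfolding window_mset_def set_mset_mset set_map by (rule rev_image_eqI) simp
qed

lemma nth_represented_in_co_window_mset: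
  fixes xs :: "int list"
  assumes "1 \<le> k0" "k0 \<le> K" "i < 2 * K" "i \<notin> {k0..<k0+K}"
  shows "\<exists>\<upsilon>\<in>#co_window_mset M xs k0 K. circ_dist (real M) (of_int (xs ! i)) (of_int \<upsilon>) = 0"
proof (cases "k0 + K \<le> i \<and> k0 \<noteq> K")
  case True
  have "Suc i \<in> set [k0+K+1..<2*K+1]"
    using True assms by auto
  then have "xs ! i - int M \<in> (\<lambda>i. xs ! (i-1) - int M) ` set [k0+K+1..<2*K+1]"
    by (rule rev_image_eqI) simp
  moreover have "circ_dist (real M) (of_int (xs ! i)) (of_int (xs ! i - int M)) = 0"
    using circ_dist_diff_modulus[of "real M"] by simp
  ultimately show ?thesis
    unfolding co_window_mset_def if_not_P[OF conjunct2[OF True]] set_mset_mset set_append set_map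
    by blast
next
  case False
  then have "Suc i \<in> set (if k0 = K then [1..<K+1] else [1..<k0+1])"
    using assms by auto
  then have "xs ! i \<in> (\<lambda>i. xs ! (i-1)) ` set (if k0 = K then [1..<K+1] else [1..<k0+1])"
    by (rule rev_image_eqI) simp
  then have "xs ! i \<in># co_window_mset M xs k0 K"
    unfolding co_window_mset_def by (cases "k0 = K") simp_all
  then show ?thesis
    using circ_dist_self by blast
qed

lemma homogeneous_window_separates:
  fixes xs :: "int list" and M K k0 :: nat and Q :: "int \<Rightarrow> bool"
  assumes len: "length xs = 2 * K" and k0: "1 \<le> k0" "k0 \<le> K"
    and count: "length (filter Q xs) = K" and homog: "\<forall>i\<in>{k0..<k0+K}. Q (xs ! i)"
    and v: "v \<in> set xs" "Q v" and w: "w \<in> set xs" "\<not> Q w"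
  shows "\<exists>\<omega>\<in>#window_mset xs k0 K. \<exists>\<upsilon>\<in>#co_window_mset M xs k0 K.
           circ_dist (real M) (of_int v) (of_int \<omega>) = 0 \<and> circ_dist (real M) (of_int w) (of_int \<upsilon>) = 0"
proof -
  have window_iff: "Q (xs ! i) \<longleftrightarrow> i \<in> {k0..<k0+K}" if "i < 2 * K" for i
    using filter_length_window_iff[OF count _ homog] that len k0 by auto
  obtain i where i: "i < 2 * K" "xs ! i = v"
    using v(1) len by (auto simp: in_set_conv_nth)
  obtain j where j: "j < 2 * K" "xs ! j = w"
    using w(1) len by (auto simp: in_set_conv_nth)
  have "i \<in> {k0..<k0+K}"
    using window_iff[OF i(1)] i(2) v(2) by simp
  then have "v \<in># window_mset xs k0 K"
    using nth_in_window_mset[of i k0 K xs] i(2) by simp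
  moreover obtain \<upsilon> where "\<upsilon> \<in># co_window_mset M xs k0 K" "circ_dist (real M) (of_int w) (of_int \<upsilon>) = 0"
    using nth_represented_in_co_window_mset[OF k0 j(1)] window_iff[OF j(1)] j w(2) by auto
  ultimately show ?thesis
    using circ_dist_self by blast
qed

lemma length_filter_complementary_maps:
  assumes "\<forall>k\<in>set ks. P (a k) \<noteq> P (b k)"
  shows "length (filter P (map a ks @ map b ks)) = length ks"
  using assms by (induction ks) auto

lemma abs_le_Max_family:
  fixes \<Delta> :: "'a \<Rightarrow> 'b \<Rightarrow> int"
  assumes "finite L" "finite I" "l \<in> L" "k \<in> I"
  shows "\<bar>\<Delta> l k\<bar> \<le> Max {\<bar>\<Delta> l k\<bar> | l k. l \<in> L \<and> k \<in> I}"
proof (rule Max_ge)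
  have "{\<bar>\<Delta> l k\<bar> | l k. l \<in> L \<and> k \<in> I} = (\<lambda>(l, k). \<bar>\<Delta> l k\<bar>) ` (L \<times> I)"
    by auto
  then show "finite {\<bar>\<Delta> l k\<bar> | l k. l \<in> L \<and> k \<in> I}"
    using assms(1,2) by simp
qed (use assms(3,4) in blast)

lemma two_clusters_window_split:
  fixes a b :: "nat \<Rightarrow> int" and xs :: "int list" and M K k0 :: nat and t c1 c2 :: int
  assumes xs: "xs = sort (map a [1..<K+1] @ map b [1..<K+1])"
    and range: "\<forall>k\<in>{1..K}. a k \<in> {0..<int M} \<and> b k \<in> {0..<int M}"
    and t: "8 * t < int M"
    and near: "\<forall>k\<in>{1..K}. near_mod (int M) t c1 (a k) \<and> near_mod (int M) t c2 (b k)"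
    and disjoint: "\<forall>y. \<not> (near_mod (int M) t c1 y \<and> near_mod (int M) t c2 y)"
    and k0: "1 \<le> k0" "k0 \<le> K"
    and wide: "int M < 2 * ((cyc_next (int M) xs (k0-1) - xs ! (k0-1)) +
                            (cyc_next (int M) xs (k0+K-1) - xs ! (k0+K-1)))"
  shows "\<forall>k\<in>{1..K}. \<exists>\<omega>\<in>#window_mset xs k0 K. \<exists>\<upsilon>\<in>#co_window_mset M xs k0 K.
           (circ_dist (real M) (of_int (a k)) (of_int \<omega>) = 0 \<and>
            circ_dist (real M) (of_int (b k)) (of_int \<upsilon>) = 0) \<or>
           (circ_dist (real M) (of_int (b k)) (of_int \<omega>) = 0 \<and>
            circ_dist (real M) (of_int (a k)) (of_int \<upsilon>) = 0)"
proof -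
  let ?P1 = "near_mod (int M) t c1" and ?P2 = "near_mod (int M) t c2"
  have len: "length xs = 2 * K"
    unfolding xs by simp
  have count: "length (filter P xs) = K" if "\<forall>k\<in>{1..K}. P (a k) \<noteq> P (b k)" for P
  proof -
    have "\<forall>k\<in>set [1..<K+1]. P (a k) \<noteq> P (b k)"
      using that by auto
    from length_filter_complementary_maps[where a = a and b = b, OF this] show ?thesis
      unfolding xs filter_sort length_sort by simp
  qed
  have count1: "length (filter ?P1 xs) = K"
    using near disjoint by (intro count) blast
  have count2: "length (filter ?P2 xs) = K"
    using near disjoint by (intro count) blast
  have "sorted xs" "set xs \<subseteq> {0..<int M}" "\<forall>v\<in>set xs. ?P1 v \<or> ?P2 v"
    using range near unfolding xs by auto
  then have homog: "(\<forall>i\<in>{k0..<k0+K}. ?P1 (xs ! i)) \<or> (\<forall>i\<in>{k0..<k0+K}. ?P2 (xs ! i))"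
    using sorted_window_homogeneous[OF _ len _ t _ disjoint count1 count2 k0 wide] by blast
  have mem: "a k \<in> set xs" "b k \<in> set xs" if "k \<in> {1..K}" for k
    using that unfolding xs set_sort set_append set_map set_upt by auto
  from homog show ?thesis
  proof
    assume "\<forall>i\<in>{k0..<k0+K}. ?P1 (xs ! i)"
    from homogeneous_window_separates[OF len k0 count1 this mem(1) _ mem(2)]
    show ?thesis
      using near disjoint by blast
  next
    assume "\<forall>i\<in>{k0..<k0+K}. ?P2 (xs ! i)"
    from homogeneous_window_separates[OF len k0 count2 this mem(2) _ mem(1)]
    show ?thesis
      using near disjoint by blast
  qed
qed

theorem corollary2:
  fixes K M N1 N2 k0 :: nat and m :: "nat \<Rightarrow> nat" and \<Delta> :: "nat \<Rightarrow> nat \<Rightarrow> int"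
    and N :: "nat \<Rightarrow> int" and r rt rtc :: "nat \<Rightarrow> nat \<Rightarrow> int" and rc :: "nat \<Rightarrow> int"
    and \<tau> :: int and s D :: "nat \<Rightarrow> int" and \<Omega>1 \<Omega>2 :: "int multiset"
  assumes K: "K \<ge> 2" and M: "M > 0"
    and mpos: "\<forall>k\<in>{1..K}. m k > 0"
    and mmono: "\<forall>i\<in>{1..K}. \<forall>j\<in>{1..K}. i < j \<longrightarrow> m i < m j"
    and mcop: "\<forall>i\<in>{1..K}. \<forall>j\<in>{1..K}. i \<noteq> j \<longrightarrow> coprime (m i) (m j)"
  defines "N \<equiv> (\<lambda>l. if l = 1 then int N1 else int N2)"
    and "r \<equiv> (\<lambda>l k. lres (int M * int (m k)) (N l))"
    and "rc \<equiv> (\<lambda>l. lres (int M) (N l))"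
    and "rt \<equiv> (\<lambda>l k. r l k + \<Delta> l k)"
    and "\<tau> \<equiv> Max {\<bar>\<Delta> l k\<bar> | l k. l \<in> {1,2} \<and> k \<in> {1..K}}"
    and "rtc \<equiv> (\<lambda>l k. lres (int M) (rt l k))"
    and "s \<equiv> (\<lambda>i. sort (map (rtc 1) [1..<K+1] @ map (rtc 2) [1..<K+1]) ! (i - 1))"
    and "D \<equiv> (\<lambda>i. if i < 2 * K then s (i + 1) - s i else s 1 - s (2 * K) + int M)"
  assumes tau: "real_of_int \<tau> < real M / 8"
    and k0: "k0 \<in> {1..K}" "real_of_int (D k0 + D (k0 + K)) > real M / 2"
  defines "\<Omega>1 \<equiv> mset (map s [k0+1..<k0+K+1])"
    and "\<Omega>2 \<equiv> (if k0 = K then mset (map s [1..<K+1])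
              else mset (map (\<lambda>i. s i - int M) [k0+K+1..<2*K+1] @ map s [1..<k0+1]))"
  assumes dlow: "real M / 4 \<le> \<bar>circ_dist (real M) (of_int (rc 1)) (of_int (rc 2))\<bar>"
    and dup: "\<bar>circ_dist (real M) (of_int (rc 1)) (of_int (rc 2))\<bar> \<le> real M / 2"
  shows "\<forall>k\<in>{1..K}. \<exists>\<omega>\<in>#\<Omega>1. \<exists>\<upsilon>\<in>#\<Omega>2.
           (circ_dist (real M) (of_int (rtc 1 k)) (of_int \<omega>) = 0 \<and>
            circ_dist (real M) (of_int (rtc 2 k)) (of_int \<upsilon>) = 0) \<or>
           (circ_dist (real M) (of_int (rtc 2 k)) (of_int \<omega>) = 0 \<and>
            circ_dist (real M) (of_int (rtc 1 k)) (of_int \<upsilon>) = 0)"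
proof -
  define xs where "xs = sort (map (rtc 1) [1..<K+1] @ map (rtc 2) [1..<K+1])"
  have s_xs: "s = (\<lambda>i. xs ! (i-1))"
    unfolding s_def xs_def ..
  have \<Delta>_bound: "\<bar>\<Delta> l k\<bar> \<le> \<tau>" if "l \<in> {1,2}" "k \<in> {1..K}" for l k
    unfolding \<tau>_def using that by (intro abs_le_Max_family) auto
  have \<tau>: "8 * \<tau> < int M"
    using tau by linarith
  have near: "near_mod (int M) \<tau> (rc l) (rtc l k)" if "l \<in> {1,2}" "k \<in> {1..K}" for l k
    using near_mod_residue[of "int M" "\<Delta> l k" \<tau> "N l" "int (m k)"] \<Delta>_bound[OF that] M
    unfolding rtc_def rt_def r_def rc_def lres_def by simp
  have "length xs = 2 * K"
    unfolding xs_def by simp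
  then have gap: "D i = cyc_next (int M) xs (i-1) - xs ! (i-1)" if "1 \<le> i" "i \<le> 2 * K" for i
    using that unfolding D_def s_xs cyc_next_def by auto
  show ?thesis
    unfolding \<Omega>1_def \<Omega>2_def s_xs co_window_mset_def[symmetric] window_mset_def[symmetric]
  proof (rule two_clusters_window_split[OF xs_def _ \<tau>])
    show "\<forall>k\<in>{1..K}. rtc 1 k \<in> {0..<int M} \<and> rtc 2 k \<in> {0..<int M}"
      unfolding rtc_def lres_def using M by simp
    show "\<forall>k\<in>{1..K}. near_mod (int M) \<tau> (rc 1) (rtc 1 k) \<and> near_mod (int M) \<tau> (rc 2) (rtc 2 k)"
      using near by simp
    show "\<forall>y. \<not> (near_mod (int M) \<tau> (rc 1) y \<and> near_mod (int M) \<tau> (rc 2) y)"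
      using near_mod_disjoint_of_far[OF \<tau>(1) dlow] by blast
    show "int M < 2 * ((cyc_next (int M) xs (k0-1) - xs ! (k0-1)) +
                       (cyc_next (int M) xs (k0+K-1) - xs ! (k0+K-1)))"
      using k0 gap[of k0] gap[of "k0+K"] by simp
  qed (use k0 in auto)
qed

end
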